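(* Let $k$ be odd, $n=4k$, $d=\frac{(3^{2k}+1)^2}{20}$, let $a\in\mathrm{GF}(3^n)^*$ be nonzero, and let $r$ be a nonsquare in $\mathrm{GF}(3^4)^*$. Then the equation $$(ar)^{3^{2(k+1)}}y^{81}-(r^{d}+r^{9d})y^9+ary=0$$ has $y=0$ as its only solution in $\mathrm{GF}(3^n)$.
   Context: $\mathrm{GF}(3^4)$ is regarded as a subfield of $\mathrm{GF}(3^n)$ (since $4\mid n$). *)

theory Defs
  imports Main "HOL-Library.Cardinality"
begin

text \<open>The copy of GF(3^4) inside a finite field F of order 3^n (4 divides n)
is the set of fixed points of the 4th power of Frobenius, x \<mapsto> x^81.\<close>
definition GF81 :: "'a::field set" where
  "GF81 = {x. x ^ 81 = x}"

end

theory Submission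
  imports Defs "HOL-Algebra.Algebraic_Closure_Type" "HOL-Number_Theory.Residues"
begin

(* Let F be a finite field with 3^(4k) elements, k odd, and write N = 3^(4k) - 1 = 81^k - 1.

   1. The nonzero elements of GF(81) inside F satisfy r^80 = 1, and a nonsquare r of GF(81)
      satisfies r^40 = -1 (Euler's criterion, via a generator of the cyclic multiplicative group of F).
   2. For odd k, d = (3^(2k)+1)^2/20 is congruent to 5 modulo 80, hence r^d = r^5 and
      r^(9d) = r^45 = r^40 * r^5 = -r^5: the middle coefficient of the equation vanishes.
   3. What remains is b^(q+1) y^81 + b y = 0 with b = ar and q + 1 = 3^(2(k+1)).
      Since k + 1 is even, 80 divides q, so a nonzero root y would make -1 = b^q y^80 an
      80th power, in particular a 16th power.
   4. But N = 16 M with M odd, so c^16 = -1 would give 1 = c^N = (-1)^M = -1, which is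
      impossible in characteristic 3. *)

lemma power_ring_of_type_algebra:
  "x [^]\<^bsub>ring_of_type_algebra\<^esub> (n::nat) = (x::'a::field) ^ n"
proof -
  interpret R: field "ring_of_type_algebra :: 'a ring" by (rule field_from_type_algebra)
  show ?thesis by (induction n) (auto simp: ring_of_type_algebra_def)
qed

text \<open>The multiplicative group of a finite field is cyclic: some \<open>g\<close> generates it and
  has order exactly \<open>CARD('a) - 1\<close>.  (The group is taken from theory Multiplicative_Group,
  whose \<open>mult_of\<close> is shadowed by a homonym in Ring_Divisibility.)\<close>
lemma finite_field_generator:
  "\<exists>g::'a::{field,finite}. (\<forall>x. x \<noteq> 0 \<longrightarrow> (\<exists>i. x = g ^ i))
                          \<and> (\<forall>i. g ^ i = 1 \<longleftrightarrow> (CARD('a) - 1) dvd i)"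
proof -
  define R where "R = (ring_of_type_algebra :: 'a ring)"
  define G where "G = Multiplicative_Group.mult_of R"
  interpret R: field R unfolding R_def by (rule field_from_type_algebra)
  interpret G: group G unfolding G_def by (rule R.field_mult_group)
  have carrier_R: "carrier R = UNIV" by (simp add: R_def ring_of_type_algebra_def)
  have fin: "finite (carrier R)" by (simp add: carrier_R)
  have carrier_G: "carrier G = UNIV - {0}"
    by (simp add: G_def R_def ring_of_type_algebra_def)
  have pow_G: "x [^]\<^bsub>G\<^esub> (n::nat) = x ^ n" for x :: 'a and n
    by (simp add: G_def R_def Multiplicative_Group.nat_pow_mult_of power_ring_of_type_algebra)
  have one_G: "\<one>\<^bsub>G\<^esub> = (1::'a)" by (simp add: G_def R_def ring_of_type_algebra_def)
  obtain g where g: "g \<in> carrier G" and gen: "carrier G = {g [^]\<^bsub>R\<^esub> i | i::nat. i \<in> UNIV}"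
    using R.finite_field_mult_group_has_gen[OF fin] unfolding G_def by blast
  have gen': "carrier G = {g ^ i | i::nat. i \<in> UNIV}"
    using gen pow_G by (simp add: G_def Multiplicative_Group.nat_pow_mult_of)
  have ord_g: "G.ord g = CARD('a) - 1"
  proof -
    have "G.ord g = card (generate G {g})" by (rule G.generate_pow_card[OF g])
    also have "generate G {g} = carrier G"
      using G.generate_pow_on_finite_carrier[OF _ g] gen' fin carrier_G pow_G by simp
    also have "card (carrier G) = CARD('a) - 1"
      by (simp add: carrier_G card_Diff_singleton)
    finally show ?thesis .
  qed
  show ?thesis
  proof (intro exI[of _ g] conjI allI impI)
    fix x :: 'a
    assume "x \<noteq> 0"
    then show "\<exists>i. x = g ^ i" using gen' carrier_G by blast
  next
    fix i
    show "g ^ i = 1 \<longleftrightarrow> (CARD('a) - 1) dvd i"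
      using G.pow_eq_id[OF g, of i] pow_G one_G ord_g by simp
  qed
qed

lemma finite_field_fermat:
  fixes x :: "'a::{field,finite}"
  assumes "x \<noteq> 0" and "(CARD('a) - 1) dvd e"
  shows "x ^ e = 1"
proof -
  obtain g :: 'a where gen: "\<And>x. x \<noteq> 0 \<Longrightarrow> \<exists>i. x = g ^ i"
    and ord: "\<And>i. g ^ i = 1 \<longleftrightarrow> (CARD('a) - 1) dvd i"
    using finite_field_generator by blast
  obtain i where "x = g ^ i" using gen assms(1) by blast
  then have "x ^ e = g ^ (e * i)" by (simp add: power_mult[symmetric] mult.commute)
  also have "\<dots> = 1" using ord assms(2) by simp
  finally show ?thesis .
qed

lemma one_neq_minus_one_char_3:
  assumes "CARD('a::{field,finite}) = 3 ^ n"
  shows "(1::'a) \<noteq> -1"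
proof
  assume "(1::'a) = -1"
  then have "of_nat 2 = (0::'a)" by (simp add: eq_neg_iff_add_eq_0)
  then have "CHAR('a) dvd 2" by (simp only: of_nat_eq_0_iff_char_dvd)
  moreover have "CHAR('a) dvd 3 ^ n" using CHAR_dvd_CARD[where 'a='a] assms by simp
  ultimately have "CHAR('a) dvd gcd 2 (3 ^ n)" by (rule gcd_greatest)
  moreover have "gcd (2::nat) (3 ^ n) = 1" by simp
  ultimately show False by simp
qed

text \<open>If \<open>CARD('a) - 1 = m M\<close> with \<open>M\<close> odd and \<open>-1 \<noteq> 1\<close>, then \<open>-1\<close> is not an \<open>m\<close>-th power:
  otherwise \<open>1 = c ^ (m M) = (-1) ^ M = -1\<close>.\<close>
lemma minus_one_not_power:
  fixes c :: "'a::{field,finite}"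
  assumes "CARD('a) - 1 = m * M" and "odd M" and "(1::'a) \<noteq> -1"
  shows "c ^ m \<noteq> -1"
proof
  assume c: "c ^ m = -1"
  then have "c \<noteq> 0" using assms(3) by (cases m) auto
  then have "c ^ (m * M) = 1" using finite_field_fermat assms(1) by (metis dvd_refl)
  moreover have "c ^ (m * M) = -1" using c assms(2) by (simp add: power_mult)
  ultimately show False using assms(3) by simp
qed

text \<open>Nonzero elements of GF(81) are 80th roots of unity, so their powers only depend on the
  exponent modulo 80.\<close>
lemma GF81_power_mod_80:
  assumes "r \<in> GF81" and "r \<noteq> 0"
  shows "r ^ m = r ^ (m mod 80)"
proof -
  have "r * r ^ 80 = r * 1" using assms(1) by (simp add: GF81_def power_Suc[symmetric])
  then have r80: "r ^ 80 = 1" using assms(2) by simp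
  have "r ^ m = r ^ (80 * (m div 80) + m mod 80)" by simp
  also have "\<dots> = (r ^ 80) ^ (m div 80) * r ^ (m mod 80)" by (simp only: power_add power_mult)
  finally show ?thesis using r80 by simp
qed

text \<open>Euler's criterion for GF(81) inside F (which contains GF(81) because 80 divides
  \<open>CARD('a) - 1\<close>): an element with \<open>r ^ 40 = 1\<close> is a square of an element of GF(81).\<close>
lemma GF81_square_if_power_40:
  fixes r :: "'a::{field,finite}"
  assumes "80 dvd CARD('a) - 1" and "r \<noteq> 0" and "r ^ 40 = 1"
  shows "\<exists>s\<in>GF81. s ^ 2 = r"
proof -
  obtain g :: 'a where gen: "\<And>x. x \<noteq> 0 \<Longrightarrow> \<exists>i. x = g ^ i"
    and ord: "\<And>i. g ^ i = 1 \<longleftrightarrow> (CARD('a) - 1) dvd i"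
    using finite_field_generator by blast
  obtain P where P: "CARD('a) - 1 = 80 * P" using assms(1) by blast
  obtain j where j: "r = g ^ j" using gen assms(2) by blast
  have "g ^ (40 * j) = 1" using assms(3) j by (simp add: power_mult[symmetric] mult.commute)
  then have "40 * (2 * P) dvd 40 * j" using ord P by simp
  then have "2 * P dvd j" by simp
  then obtain t where t: "j = 2 * (P * t)" by (metis dvdE mult.assoc)
  define s where "s = g ^ (P * t)"
  have "s ^ 2 = r" unfolding s_def j t by (simp add: power_mult[symmetric] mult.commute)
  moreover have "s ^ 80 = 1" unfolding s_def using ord P
    by (simp add: power_mult[symmetric] mult.commute)
  then have "s \<in> GF81" by (simp add: GF81_def power_Suc2[of s 80, simplified])
  ultimately show ?thesis by blast
qed

text \<open>Hence a nonsquare of GF(81) satisfies \<open>r ^ 40 = -1\<close>, the other square root of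
  \<open>r ^ 80 = 1\<close>.\<close>
lemma GF81_nonsquare_power_40:
  fixes r :: "'a::{field,finite}"
  assumes "80 dvd CARD('a) - 1" and "r \<in> GF81" and "r \<noteq> 0"
    and "\<not> (\<exists>s\<in>GF81. s ^ 2 = r)"
  shows "r ^ 40 = -1"
proof -
  have "r ^ 40 \<noteq> 1" using GF81_square_if_power_40 assms by blast
  moreover have "(r ^ 40 - 1) * (r ^ 40 + 1) = r ^ 80 - 1"
    by (simp add: algebra_simps power_add[symmetric])
  moreover have "r ^ 80 = 1" using GF81_power_mod_80[OF assms(2,3), of 80] by simp
  ultimately show ?thesis by (simp add: eq_neg_iff_add_eq_0)
qed

text \<open>Once its middle term has vanished, the equation has only the trivial root: a nonzero
  root would make \<open>-1 = (b ^ (q div 80) * y) ^ 80\<close> a 16th power.\<close>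
lemma reduced_equation_trivial_root:
  fixes b y :: "'a::{field,finite}"
  assumes "CARD('a) - 1 = 16 * M" and "odd M" and "(1::'a) \<noteq> -1"
    and "80 dvd q" and "b \<noteq> 0"
    and "b ^ (q + 1) * y ^ 81 + b * y = 0"
  shows "y = 0"
proof (rule ccontr)
  assume "y \<noteq> 0"
  obtain u where q: "q = 80 * u" using assms(4) by blast
  have "(b ^ q * y ^ 80 + 1) * (b * y) = b ^ (q + 1) * y ^ 81 + b * y"
    by (simp add: algebra_simps power_Suc2[of y 80, simplified])
  then have "b ^ q * y ^ 80 = -1"
    using assms(5,6) \<open>y \<noteq> 0\<close> by (simp add: eq_neg_iff_add_eq_0)
  moreover have "b ^ q * y ^ 80 = ((b ^ u * y) ^ 5) ^ 16"
    by (simp add: q power_mult_distrib power_mult[symmetric] mult.commute)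
  ultimately show False using minus_one_not_power[OF assms(1-3)] by metis
qed

lemma power_81_mod_80: "(81::nat) ^ j mod 80 = 1"
  by (subst power_mod[symmetric]) simp

text \<open>For odd \<open>k\<close>, \<open>d = (3^(2k)+1)^2/20\<close> is \<open>5\<close> modulo \<open>80\<close>: writing \<open>81^j = 80t + 1\<close>,
  \<open>3^(2k) + 1 = 10(72t + 1)\<close> and \<open>d = 5(72t + 1)^2\<close>.\<close>
lemma exponent_d_mod_80:
  assumes "odd (k::nat)"
  shows "(3 ^ (2 * k) + 1)\<^sup>2 div 20 mod 80 = (5::nat)"
proof -
  obtain j where k: "k = 2 * j + 1" using assms oddE by blast
  obtain t where t: "(81::nat) ^ j = 80 * t + 1"
    using power_81_mod_80[of j] by (metis div_mod_decomp add.commute mult.commute)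
  have "(3::nat) ^ (2 * k) = 9 * 81 ^ j" by (simp add: k power_mult power_add)
  then have v: "(3::nat) ^ (2 * k) + 1 = 10 * (72 * t + 1)" by (simp add: t)
  have "(10 * (72 * t + 1))\<^sup>2 = 20 * (5 * (72 * t + 1)\<^sup>2)"
    by (simp add: power2_eq_square algebra_simps)
  then have "(3 ^ (2 * k) + 1)\<^sup>2 div 20 = 5 * (72 * t + 1)\<^sup>2" unfolding v by simp
  also have "\<dots> = 80 * (324 * t * t + 9 * t) + (5::nat)"
    by (simp add: power2_eq_square algebra_simps)
  finally show ?thesis by (simp only: mod_mult_self4) simp
qed

text \<open>For odd \<open>k\<close>, \<open>81^k - 1 = 16 M\<close> with \<open>M\<close> odd, since \<open>81^k = 81 \<cdot> 6561^j \<equiv> 81 (mod 32)\<close>.\<close>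
lemma power_81_minus_one_odd_part:
  assumes "odd (k::nat)"
  shows "\<exists>M. odd M \<and> (81::nat) ^ k - 1 = 16 * M"
proof -
  obtain j where k: "k = 2 * j + 1" using assms oddE by blast
  have "(6561::nat) ^ j mod 32 = 1" by (subst power_mod[symmetric]) simp
  then obtain t where t: "(6561::nat) ^ j = 32 * t + 1"
    by (metis div_mod_decomp add.commute mult.commute)
  have "(81::nat) ^ k = 16 * (162 * t + 5) + 1" by (simp add: k power_mult power_add t)
  then show ?thesis by (intro exI[of _ "162 * t + 5"]) simp
qed

text \<open>Hence \<open>80\<close> divides \<open>81^j - 1\<close>; this gives both \<open>GF(81) \<subseteq> F\<close> and \<open>80 | q\<close>.\<close>
lemma eighty_dvd_power_81_minus_one: "(80::nat) dvd 81 ^ j - 1"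
  using dvd_minus_mod[of 80 "81 ^ j :: nat"] unfolding power_81_mod_80 .

theorem lemma4:
  fixes k :: nat and a r y :: "'a::{field,finite}"
  assumes "odd k"
    and "CARD('a) = 3 ^ (4 * k)"
    and "a \<noteq> 0"
    and "r \<in> GF81" and "r \<noteq> 0"
    and "\<not> (\<exists>s\<in>GF81. s ^ 2 = r)"
    and "(a * r) ^ (3 ^ (2 * (k + 1))) * y ^ 81
           - (r ^ ((3 ^ (2 * k) + 1)\<^sup>2 div 20) + r ^ (9 * ((3 ^ (2 * k) + 1)\<^sup>2 div 20))) * y ^ 9
           + a * r * y = 0"
  shows "y = 0"
proof -
  define d where "d = (3 ^ (2 * k) + 1)\<^sup>2 div (20::nat)"
  have card: "CARD('a) - 1 = 81 ^ k - 1" using assms(2) by (simp add: power_mult)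
  obtain M where M: "odd M" "CARD('a) - 1 = 16 * M"
    using power_81_minus_one_odd_part[OF assms(1)] card by auto
  txt \<open>The middle coefficient vanishes: \<open>r ^ d = r ^ 5\<close> and \<open>r ^ (9 d) = r ^ 40 r ^ 5 = - r ^ 5\<close>.\<close>
  have r40: "r ^ 40 = -1"
    using GF81_nonsquare_power_40[OF _ assms(4-6)] eighty_dvd_power_81_minus_one card by simp
  have d5: "d mod 80 = 5" unfolding d_def by (rule exponent_d_mod_80[OF assms(1)])
  then have d45: "9 * d mod 80 = 45" by (simp add: mod_mult_right_eq[of 9 d 80, symmetric])
  have "r ^ d = r ^ 5" using GF81_power_mod_80[OF assms(4,5), of d] d5 by simp
  moreover have "r ^ (9 * d) = r ^ 40 * r ^ 5"
    using GF81_power_mod_80[OF assms(4,5), of "9 * d"] d45 by (simp add: power_add[symmetric])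
  ultimately have middle: "r ^ d + r ^ (9 * d) = 0" using r40 by simp
  txt \<open>The leading exponent is \<open>q + 1\<close> with \<open>q = 81 ^ j - 1\<close>, since \<open>k + 1 = 2 j\<close>.\<close>
  have "even (k + 1)" using assms(1) by simp
  then obtain j where "k + 1 = 2 * j" by (rule evenE)
  then have q: "(3::nat) ^ (2 * (k + 1)) = (81 ^ j - 1) + 1" by (simp add: power_mult)
  have reduced: "(a * r) ^ ((81 ^ j - 1) + 1) * y ^ 81 + a * r * y = 0"
    using assms(7) unfolding d_def[symmetric] q middle by simp
  show "y = 0"
    by (rule reduced_equation_trivial_root[OF M(2,1) one_neq_minus_one_char_3[OF assms(2)]
          eighty_dvd_power_81_minus_one _ reduced]) (use assms(3,5) in simp)
qed

end
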